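(* Let $\rho$ be a regular ordinal, let $\Gamma$ be a presheaf on $\mathbb{T}$, let $X$ be a family over $\Gamma$ all of whose fibres $X(\mathcal{E},\vartheta,\gamma)$ have cardinality strictly smaller than $\rho$, and let $\varphi$ be a predicate over $(\Gamma.X)\times\mathrm{Clk}$. Then for every object $(\mathcal{E},\vartheta)$ of $\mathbb{T}$ and every $\gamma\in\Gamma(\mathcal{E},\vartheta)$ the following are equivalent: (A) there exists $x\in X(\mathcal{E},\vartheta,\gamma)$ such that for all $\alpha<\rho$, $\star\in\varphi(\mathcal{E}\cup\{\lambda_\mathcal{E}\},\vartheta[\lambda_\mathcal{E}\mapsto\alpha],\iota\cdot\gamma,\iota\cdot x,\lambda_\mathcal{E})$; (B) for all $\alpha<\rho$ there exists $x\in X(\mathcal{E}\cup\{\lambda_\mathcal{E}\},\vartheta[\lambda_\mathcal{E}\mapsto\alpha],\iota\cdot\gamma)$ such that $\star\in\varphi(\mathcal{E}\cup\{\lambda_\mathcal{E}\},\vartheta[\lambda_\mathcal{E}\mapsto\alpha],\iota\cdot\gamma,x,\lambda_\mathcal{E})$. (That is, in the model, $\exists x{:}X.\,\forall\kappa.\,\varphi(x,\kappa)$ equals $\forall\kappa.\,\exists x{:}X.\,\varphi(x,\kappa)$.)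
   Context: Fix a limit ordinal $\rho$ (here assumed regular, i.e. equal to its own cofinality) and a countably infinite set of clock names. The category $\mathbb{T}$ has objects pairs $(\mathcal{E},\vartheta)$ with $\mathcal{E}$ a finite set of clock names and $\vartheta:\mathcal{E}\to\rho$; a morphism $(\mathcal{E},\vartheta)\to(\mathcal{E}',\vartheta')$ is a function $\sigma:\mathcal{E}\to\mathcal{E}'$ with $\vartheta'\circ\sigma\le\vartheta$ pointwise. A presheaf on $\mathbb{T}$ is a covariant functor $\mathbb{T}\to\mathsf{Set}$; write $\sigma\cdot x$ for the action of $\sigma$. $\mathrm{Clk}$ is the presheaf $\mathrm{Clk}(\mathcal{E},\vartheta)=\mathcal{E}$ with $\sigma\cdot\lambda=\sigma(\lambda)$. For a presheaf $\Gamma$, $\int\Gamma$ is its category of elements, with objects $(\mathcal{E},\vartheta,\gamma)$; a presheaf $X$ over $\int\Gamma$ is a covariant functor $\int\Gamma\to\mathsf{Set}$ with fibres $X(\mathcal{E},\vartheta,\gamma)$ and maps $\sigma\cdot(-)$. $X$ is invariant under clock introduction if for all $(\mathcal{E},\vartheta)$, $\gamma$, clock names $\lambda\notin\mathcal{E}$ and $\alpha<\rho$, the map $\iota\cdot(-): X(\mathcal{E},\vartheta,\gamma)\to X(\mathcal{E}\cup\{\lambda\},\vartheta[\lambda\mapsto\alpha],\iota\cdot\gamma)$ induced by the inclusion $\iota:\mathcal{E}\to\mathcal{E}\cup\{\lambda\}$ is a bijection. A family over $\Gamma$ is a presheaf over $\int\Gamma$ invariant under clock introduction; a predicate is a family all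 of whose fibres are subsets of $\{\star\}$. The comprehension $\Gamma.X$ is the presheaf $(\Gamma.X)(\mathcal{E},\vartheta)=\{(\gamma,x)\mid\gamma\in\Gamma(\mathcal{E},\vartheta), x\in X(\mathcal{E},\vartheta,\gamma)\}$; thus a predicate $\varphi$ over $(\Gamma.X)\times\mathrm{Clk}$ has fibres $\varphi(\mathcal{E},\vartheta,\gamma,x,\lambda)\subseteq\{\star\}$ for $\lambda\in\mathcal{E}$. A function assigning to each finite set $\mathcal{E}$ of clock names a clock name $\lambda_\mathcal{E}\notin\mathcal{E}$ is fixed, and $\iota$ denotes the inclusion $\mathcal{E}\to\mathcal{E}\cup\{\lambda_\mathcal{E}\}$, viewed as a morphism $(\mathcal{E},\vartheta)\to(\mathcal{E}\cup\{\lambda_\mathcal{E}\},\vartheta[\lambda_\mathcal{E}\mapsto\alpha])$. *)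

theory Defs
  imports Main "HOL-Library.FuncSet" "HOL-Library.Countable"
begin

text \<open>The regular limit ordinal rho is represented by a well-ordered type 'o:
  the ordinals alpha < rho are exactly the elements of 'o.\<close>

definition limit_ord :: "'o::wellorder itself \<Rightarrow> bool" where
  "limit_ord _ \<longleftrightarrow> (\<forall>a::'o. \<exists>b. a < b)"

text \<open>Regular: rho equals its own cofinality, i.e. every cofinal subset of rho has
  order type rho (it is not order-isomorphic to a proper initial segment).\<close>
definition regular_ord :: "'o::wellorder itself \<Rightarrow> bool" where
  "regular_ord _ \<longleftrightarrow>
     (\<forall>S::'o set. (\<forall>a. \<exists>s\<in>S. a \<le> s) \<longrightarrow>
        \<not> (\<exists>(\<alpha>::'o) (f::'o \<Rightarrow> 'o). strict_mono_on {\<beta>. \<beta> < \<alpha>} f \<and> f ` {\<beta>. \<beta> < \<alpha>} = S))"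

text \<open>An object (E, theta) is represented by a partial map theta with finite domain E.\<close>
definition tobj :: "('c \<rightharpoonup> 'o) \<Rightarrow> bool" where
  "tobj \<theta> \<longleftrightarrow> finite (dom \<theta>)"

definition thom :: "('c \<rightharpoonup> 'o::order) \<Rightarrow> ('c \<rightharpoonup> 'o) \<Rightarrow> ('c \<Rightarrow> 'c) \<Rightarrow> bool" where
  "thom \<theta> \<theta>' \<sigma> \<longleftrightarrow> \<sigma> \<in> dom \<theta> \<rightarrow>\<^sub>E dom \<theta>' \<and>
     (\<forall>c\<in>dom \<theta>. the (\<theta>' (\<sigma> c)) \<le> the (\<theta> c))"

definition tid :: "('c \<rightharpoonup> 'o) \<Rightarrow> ('c \<Rightarrow> 'c)" where
  "tid \<theta> = restrict id (dom \<theta>)"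

definition tcomp :: "('c \<rightharpoonup> 'o) \<Rightarrow> ('c \<Rightarrow> 'c) \<Rightarrow> ('c \<Rightarrow> 'c) \<Rightarrow> ('c \<Rightarrow> 'c)" where
  "tcomp \<theta> \<tau> \<sigma> = restrict (\<tau> \<circ> \<sigma>) (dom \<theta>)"

text \<open>A presheaf (covariant functor T -> Set): fibres F theta and action
  act theta theta' sigma for sigma : theta -> theta'.\<close>
definition presheaf ::
  "(('c \<rightharpoonup> 'o::order) \<Rightarrow> 'a set) \<Rightarrow> (('c \<rightharpoonup> 'o) \<Rightarrow> ('c \<rightharpoonup> 'o) \<Rightarrow> ('c \<Rightarrow> 'c) \<Rightarrow> 'a \<Rightarrow> 'a) \<Rightarrow> bool" where
  "presheaf F act \<longleftrightarrow>
     (\<forall>\<theta> \<theta>' \<sigma> a. tobj \<theta> \<and> tobj \<theta>' \<and> thom \<theta> \<theta>' \<sigma> \<and> a \<in> F \<theta> \<longrightarrow> act \<theta> \<theta>' \<sigma> a \<in> F \<theta>') \<and>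
     (\<forall>\<theta> a. tobj \<theta> \<and> a \<in> F \<theta> \<longrightarrow> act \<theta> \<theta> (tid \<theta>) a = a) \<and>
     (\<forall>\<theta> \<theta>' \<theta>'' \<sigma> \<tau> a. tobj \<theta> \<and> tobj \<theta>' \<and> tobj \<theta>'' \<and> thom \<theta> \<theta>' \<sigma> \<and> thom \<theta>' \<theta>'' \<tau> \<and> a \<in> F \<theta>
        \<longrightarrow> act \<theta> \<theta>'' (tcomp \<theta> \<tau> \<sigma>) a = act \<theta>' \<theta>'' \<tau> (act \<theta> \<theta>' \<sigma> a))"

text \<open>A presheaf over the category of elements of (G, Gact): fibres X theta g and
  action Xact theta theta' sigma g : X theta g -> X theta' (Gact theta theta' sigma g).\<close>
definition presheaf_over ::
  "(('c \<rightharpoonup> 'o::order) \<Rightarrow> 'g set) \<Rightarrow> (('c \<rightharpoonup> 'o) \<Rightarrow> ('c \<rightharpoonup> 'o) \<Rightarrow> ('c \<Rightarrow> 'c) \<Rightarrow> 'g \<Rightarrow> 'g) \<Rightarrow>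
   (('c \<rightharpoonup> 'o) \<Rightarrow> 'g \<Rightarrow> 'x set) \<Rightarrow> (('c \<rightharpoonup> 'o) \<Rightarrow> ('c \<rightharpoonup> 'o) \<Rightarrow> ('c \<Rightarrow> 'c) \<Rightarrow> 'g \<Rightarrow> 'x \<Rightarrow> 'x) \<Rightarrow> bool" where
  "presheaf_over G Gact X Xact \<longleftrightarrow>
     (\<forall>\<theta> \<theta>' \<sigma> g x. tobj \<theta> \<and> tobj \<theta>' \<and> thom \<theta> \<theta>' \<sigma> \<and> g \<in> G \<theta> \<and> x \<in> X \<theta> g
        \<longrightarrow> Xact \<theta> \<theta>' \<sigma> g x \<in> X \<theta>' (Gact \<theta> \<theta>' \<sigma> g)) \<and>
     (\<forall>\<theta> g x. tobj \<theta> \<and> g \<in> G \<theta> \<and> x \<in> X \<theta> g \<longrightarrow> Xact \<theta> \<theta> (tid \<theta>) g x = x) \<and>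
     (\<forall>\<theta> \<theta>' \<theta>'' \<sigma> \<tau> g x. tobj \<theta> \<and> tobj \<theta>' \<and> tobj \<theta>'' \<and> thom \<theta> \<theta>' \<sigma> \<and> thom \<theta>' \<theta>'' \<tau>
        \<and> g \<in> G \<theta> \<and> x \<in> X \<theta> g
        \<longrightarrow> Xact \<theta> \<theta>'' (tcomp \<theta> \<tau> \<sigma>) g x = Xact \<theta>' \<theta>'' \<tau> (Gact \<theta> \<theta>' \<sigma> g) (Xact \<theta> \<theta>' \<sigma> g x))"

text \<open>Family: presheaf over the category of elements, invariant under clock introduction.\<close>
definition family ::
  "(('c \<rightharpoonup> 'o::order) \<Rightarrow> 'g set) \<Rightarrow> (('c \<rightharpoonup> 'o) \<Rightarrow> ('c \<rightharpoonup> 'o) \<Rightarrow> ('c \<Rightarrow> 'c) \<Rightarrow> 'g \<Rightarrow> 'g) \<Rightarrow>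
   (('c \<rightharpoonup> 'o) \<Rightarrow> 'g \<Rightarrow> 'x set) \<Rightarrow> (('c \<rightharpoonup> 'o) \<Rightarrow> ('c \<rightharpoonup> 'o) \<Rightarrow> ('c \<Rightarrow> 'c) \<Rightarrow> 'g \<Rightarrow> 'x \<Rightarrow> 'x) \<Rightarrow> bool" where
  "family G Gact X Xact \<longleftrightarrow> presheaf_over G Gact X Xact \<and>
     (\<forall>\<theta> g l \<alpha>. tobj \<theta> \<and> g \<in> G \<theta> \<and> l \<notin> dom \<theta> \<longrightarrow>
        bij_betw (Xact \<theta> (\<theta>(l \<mapsto> \<alpha>)) (tid \<theta>) g) (X \<theta> g)
                 (X (\<theta>(l \<mapsto> \<alpha>)) (Gact \<theta> (\<theta>(l \<mapsto> \<alpha>)) (tid \<theta>) g)))"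

text \<open>A predicate is a family whose fibres are subsets of {star}; we use the unit type.\<close>
definition predicate ::
  "(('c \<rightharpoonup> 'o::order) \<Rightarrow> 'g set) \<Rightarrow> (('c \<rightharpoonup> 'o) \<Rightarrow> ('c \<rightharpoonup> 'o) \<Rightarrow> ('c \<Rightarrow> 'c) \<Rightarrow> 'g \<Rightarrow> 'g) \<Rightarrow>
   (('c \<rightharpoonup> 'o) \<Rightarrow> 'g \<Rightarrow> unit set) \<Rightarrow> (('c \<rightharpoonup> 'o) \<Rightarrow> ('c \<rightharpoonup> 'o) \<Rightarrow> ('c \<Rightarrow> 'c) \<Rightarrow> 'g \<Rightarrow> unit \<Rightarrow> unit) \<Rightarrow> bool" where
  "predicate G Gact P Pact \<longleftrightarrow> family G Gact P Pact"

definition compr :: "(('c \<rightharpoonup> 'o) \<Rightarrow> 'g set) \<Rightarrow> (('c \<rightharpoonup> 'o) \<Rightarrow> 'g \<Rightarrow> 'x set) \<Rightarrow> ('c \<rightharpoonup> 'o) \<Rightarrow> ('g \<times> 'x) set" where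
  "compr G X \<theta> = {(g, x). g \<in> G \<theta> \<and> x \<in> X \<theta> g}"

definition compr_act ::
  "(('c \<rightharpoonup> 'o) \<Rightarrow> ('c \<rightharpoonup> 'o) \<Rightarrow> ('c \<Rightarrow> 'c) \<Rightarrow> 'g \<Rightarrow> 'g) \<Rightarrow>
   (('c \<rightharpoonup> 'o) \<Rightarrow> ('c \<rightharpoonup> 'o) \<Rightarrow> ('c \<Rightarrow> 'c) \<Rightarrow> 'g \<Rightarrow> 'x \<Rightarrow> 'x) \<Rightarrow>
   ('c \<rightharpoonup> 'o) \<Rightarrow> ('c \<rightharpoonup> 'o) \<Rightarrow> ('c \<Rightarrow> 'c) \<Rightarrow> 'g \<times> 'x \<Rightarrow> 'g \<times> 'x" where
  "compr_act Gact Xact \<theta> \<theta>' \<sigma> gx = (Gact \<theta> \<theta>' \<sigma> (fst gx), Xact \<theta> \<theta>' \<sigma> (fst gx) (snd gx))"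

text \<open>Binary product of a presheaf with Clk, where Clk(E, theta) = E.\<close>
definition times_clk :: "(('c \<rightharpoonup> 'o) \<Rightarrow> 'a set) \<Rightarrow> ('c \<rightharpoonup> 'o) \<Rightarrow> ('a \<times> 'c) set" where
  "times_clk F \<theta> = F \<theta> \<times> dom \<theta>"

definition times_clk_act ::
  "(('c \<rightharpoonup> 'o) \<Rightarrow> ('c \<rightharpoonup> 'o) \<Rightarrow> ('c \<Rightarrow> 'c) \<Rightarrow> 'a \<Rightarrow> 'a) \<Rightarrow>
   ('c \<rightharpoonup> 'o) \<Rightarrow> ('c \<rightharpoonup> 'o) \<Rightarrow> ('c \<Rightarrow> 'c) \<Rightarrow> 'a \<times> 'c \<Rightarrow> 'a \<times> 'c" where
  "times_clk_act act \<theta> \<theta>' \<sigma> ac = (act \<theta> \<theta>' \<sigma> (fst ac), \<sigma> (snd ac))"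

end

theory Submission imports Defs begin

unbundle cardinal_syntax

text \<open>For fixed \<open>x\<close>, the set of \<open>\<alpha>\<close> at which \<open>\<phi>\<close> holds at \<open>(\<iota>\<cdot>\<gamma>, \<iota>\<cdot>x, \<lambda>)\<close> is downward
  closed: for \<open>\<alpha> \<le> \<beta>\<close> the identity is a morphism \<open>\<vartheta>[\<lambda>\<mapsto>\<beta>] \<rightarrow> \<vartheta>[\<lambda>\<mapsto>\<alpha>]\<close> and \<open>\<phi>\<close> is
  a presheaf. Since \<open>\<iota>\<cdot>(-)\<close> is a bijection on fibres, (B) says that every \<open>\<alpha>\<close> is reached
  by some \<open>x\<close>. If no \<open>x\<close> reaches all \<open>\<alpha>\<close>, pick for each \<open>x\<close> an \<open>\<alpha>\<^sub>x\<close> it misses;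
  there are fewer than \<open>\<rho>\<close> of them, so by regularity they all lie below some \<open>\<alpha>\<close>, and an
  \<open>x\<close> reaching \<open>\<alpha>\<close> would also reach \<open>\<alpha>\<^sub>x\<close>.\<close>

lemma Well_order_le: "Well_order {(x::'a::wellorder, y). x \<le> y}"
  unfolding well_order_on_def linear_order_on_def partial_order_on_def preorder_on_def
    total_on_def refl_on_def trans_def antisym_def
  by (auto simp: Field_def intro: wf_subset[OF wf])

lemma Field_Restr_le: "Field (Restr {(x::'a::order, y). x \<le> y} A) = A"
  unfolding Field_def by auto

lemma iso_Restr_le_strict_mono_on:
  assumes "iso (Restr {(x::'a::linorder, y). x \<le> y} A) (Restr {(x::'b::order, y). x \<le> y} B) f"
  shows "strict_mono_on A f"
proof (rule strict_mono_onI)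
  fix x y assume "x \<in> A" "y \<in> A" "x < y"
  with assms have "f x \<le> f y" and "f x \<noteq> f y"
    unfolding iso_iff2 Field_Restr_le bij_betw_def inj_on_def by (auto dest: less_imp_le)
  then show "f x < f y" by simp
qed

lemma strict_mono_enumeration_of_small_set:
  fixes B :: "'o::wellorder set"
  assumes "|B| <o |UNIV :: 'o set|"
  shows "\<exists>(\<alpha>::'o) f. strict_mono_on {\<beta>. \<beta> < \<alpha>} f \<and> f ` {\<beta>. \<beta> < \<alpha>} = B"
proof -
  define le where "le = {(x::'o, y). x \<le> y}"
  have wo: "Well_order le" and wo_B: "Well_order (Restr le B)"
    unfolding le_def using Well_order_le Well_order_Restr by blast+
  have "Restr le B <o le"
  proof (rule ccontr)
    assume "\<not> Restr le B <o le"
    then have "le \<le>o Restr le B" using ordLess_or_ordLeq[OF wo_B wo] by blast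
    then have "|Field le| \<le>o |Field (Restr le B)|" by (rule card_of_mono2)
    moreover have "Field le = UNIV" unfolding le_def Field_def by auto
    ultimately have "|UNIV :: 'o set| \<le>o |B|"
      unfolding le_def Field_Restr_le by simp
    then show False using assms not_ordLess_ordLeq by blast
  qed
  then obtain \<alpha> where "Restr le B =o Restr le (underS le \<alpha>)"
    using ordLess_iff_ordIso_Restr[OF wo wo_B] by blast
  then obtain f where iso: "iso (Restr le (underS le \<alpha>)) (Restr le B) f"
    using ordIso_symmetric unfolding ordIso_def by blast
  have seg: "underS le \<alpha> = {\<beta>. \<beta> < \<alpha>}" unfolding underS_def le_def by auto
  have "strict_mono_on {\<beta>. \<beta> < \<alpha>} f"
    using iso_Restr_le_strict_mono_on[OF iso[unfolded le_def]] seg unfolding le_def by simp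
  moreover have "f ` {\<beta>. \<beta> < \<alpha>} = B"
    using iso seg unfolding iso_iff2 bij_betw_def le_def Field_Restr_le by simp
  ultimately show ?thesis by blast
qed

lemma regular_ord_bounded:
  fixes B :: "'o::wellorder set"
  assumes "regular_ord TYPE('o)" and "|B| <o |UNIV :: 'o set|"
  shows "\<exists>\<alpha>. \<forall>\<beta>\<in>B. \<beta> < \<alpha>"
proof (rule ccontr)
  assume "\<not> ?thesis"
  then have "\<forall>\<alpha>. \<exists>\<beta>\<in>B. \<alpha> \<le> \<beta>" by (meson not_le)
  then show False
    using assms strict_mono_enumeration_of_small_set[OF assms(2)] unfolding regular_ord_def by blast
qed

lemma regular_ord_bex_all_commute:
  fixes P :: "'x \<Rightarrow> 'o::wellorder \<Rightarrow> bool"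
  assumes "regular_ord TYPE('o)" and "|A| <o |UNIV :: 'o set|"
    and down_closed: "\<And>x \<alpha> \<beta>. x \<in> A \<Longrightarrow> \<alpha> \<le> \<beta> \<Longrightarrow> P x \<beta> \<Longrightarrow> P x \<alpha>"
  shows "(\<exists>x\<in>A. \<forall>\<alpha>. P x \<alpha>) \<longleftrightarrow> (\<forall>\<alpha>. \<exists>x\<in>A. P x \<alpha>)"
proof
  assume reach: "\<forall>\<alpha>. \<exists>x\<in>A. P x \<alpha>"
  show "\<exists>x\<in>A. \<forall>\<alpha>. P x \<alpha>"
  proof (rule ccontr)
    assume "\<not> ?thesis"
    then obtain fail where fail: "\<forall>x\<in>A. \<not> P x (fail x)" by metis
    have "|fail ` A| <o |UNIV :: 'o set|"
      using card_of_image ordLeq_ordLess_trans assms(2) by blast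
    then obtain \<alpha> where "\<forall>x\<in>A. fail x < \<alpha>"
      using regular_ord_bounded[OF assms(1)] by blast
    moreover obtain x where "x \<in> A" "P x \<alpha>" using reach by blast
    ultimately show False using fail down_closed less_imp_le by metis
  qed
qed blast

lemma tobj_fun_upd: "tobj \<theta> \<Longrightarrow> tobj (\<theta>(l \<mapsto> \<alpha>))"
  unfolding tobj_def by simp

lemma thom_clock_intro: "l \<notin> dom \<theta> \<Longrightarrow> thom \<theta> (\<theta>(l \<mapsto> \<alpha>)) (tid \<theta>)"
  unfolding thom_def tid_def by auto

lemma thom_tid_fun_upd_mono: "\<alpha> \<le> \<beta> \<Longrightarrow> thom (\<theta>(l \<mapsto> \<beta>)) (\<theta>(l \<mapsto> \<alpha>)) (tid (\<theta>(l \<mapsto> \<beta>)))"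
  unfolding thom_def tid_def by auto

lemma tcomp_tid_tid: "dom \<theta> \<subseteq> dom \<theta>' \<Longrightarrow> tcomp \<theta> (tid \<theta>') (tid \<theta>) = tid \<theta>"
  unfolding tcomp_def tid_def restrict_def by (auto simp: fun_eq_iff)

lemma presheaf_act_in:
  "\<lbrakk>presheaf G Gact; tobj \<theta>; tobj \<theta>'; thom \<theta> \<theta>' \<sigma>; a \<in> G \<theta>\<rbrakk> \<Longrightarrow> Gact \<theta> \<theta>' \<sigma> a \<in> G \<theta>'"
  unfolding presheaf_def by blast

lemma presheaf_act_tcomp:
  "\<lbrakk>presheaf G Gact; tobj \<theta>; tobj \<theta>'; tobj \<theta>''; thom \<theta> \<theta>' \<sigma>; thom \<theta>' \<theta>'' \<tau>; a \<in> G \<theta>\<rbrakk>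
   \<Longrightarrow> Gact \<theta> \<theta>'' (tcomp \<theta> \<tau> \<sigma>) a = Gact \<theta>' \<theta>'' \<tau> (Gact \<theta> \<theta>' \<sigma> a)"
  unfolding presheaf_def by blast

lemma presheaf_over_act_in:
  "\<lbrakk>presheaf_over G Gact X Xact; tobj \<theta>; tobj \<theta>'; thom \<theta> \<theta>' \<sigma>; g \<in> G \<theta>; x \<in> X \<theta> g\<rbrakk>
   \<Longrightarrow> Xact \<theta> \<theta>' \<sigma> g x \<in> X \<theta>' (Gact \<theta> \<theta>' \<sigma> g)"
  unfolding presheaf_over_def by blast

lemma presheaf_over_act_tcomp:
  "\<lbrakk>presheaf_over G Gact X Xact; tobj \<theta>; tobj \<theta>'; tobj \<theta>''; thom \<theta> \<theta>' \<sigma>; thom \<theta>' \<theta>'' \<tau>;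
    g \<in> G \<theta>; x \<in> X \<theta> g\<rbrakk>
   \<Longrightarrow> Xact \<theta> \<theta>'' (tcomp \<theta> \<tau> \<sigma>) g x = Xact \<theta>' \<theta>'' \<tau> (Gact \<theta> \<theta>' \<sigma> g) (Xact \<theta> \<theta>' \<sigma> g x)"
  unfolding presheaf_over_def by blast

lemma family_clock_intro_image:
  "\<lbrakk>family G Gact X Xact; tobj \<theta>; g \<in> G \<theta>; l \<notin> dom \<theta>\<rbrakk>
   \<Longrightarrow> Xact \<theta> (\<theta>(l \<mapsto> \<alpha>)) (tid \<theta>) g ` X \<theta> g = X (\<theta>(l \<mapsto> \<alpha>)) (Gact \<theta> (\<theta>(l \<mapsto> \<alpha>)) (tid \<theta>) g)"
  unfolding family_def bij_betw_def by blast

lemma predicate_mem_transport: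
  assumes G: "presheaf G Gact" and X: "family G Gact X Xact"
    and \<phi>: "predicate (times_clk (compr G X)) (times_clk_act (compr_act Gact Xact)) \<phi> \<phi>act"
    and objs: "tobj \<theta>" "tobj \<theta>'" "tobj \<theta>''" and homs: "thom \<theta> \<theta>' \<sigma>" "thom \<theta>' \<theta>'' \<tau>"
    and \<gamma>: "\<gamma> \<in> G \<theta>" and x: "x \<in> X \<theta> \<gamma>" and l: "l \<in> dom \<theta>'"
    and holds: "() \<in> \<phi> \<theta>' ((Gact \<theta> \<theta>' \<sigma> \<gamma>, Xact \<theta> \<theta>' \<sigma> \<gamma> x), l)"
  shows "() \<in> \<phi> \<theta>'' ((Gact \<theta> \<theta>'' (tcomp \<theta> \<tau> \<sigma>) \<gamma>, Xact \<theta> \<theta>'' (tcomp \<theta> \<tau> \<sigma>) \<gamma> x), \<tau> l)"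
proof -
  have X': "presheaf_over G Gact X Xact" using X unfolding family_def by blast
  have \<phi>': "presheaf_over (times_clk (compr G X)) (times_clk_act (compr_act Gact Xact)) \<phi> \<phi>act"
    using \<phi> unfolding predicate_def family_def by blast
  let ?p = "((Gact \<theta> \<theta>' \<sigma> \<gamma>, Xact \<theta> \<theta>' \<sigma> \<gamma> x), l)"
  have "?p \<in> times_clk (compr G X) \<theta>'"
    using presheaf_act_in[OF G, OF objs(1,2) homs(1) \<gamma>]
      presheaf_over_act_in[OF X', OF objs(1,2) homs(1) \<gamma> x] l
    unfolding times_clk_def compr_def by blast
  from presheaf_over_act_in[OF \<phi>', OF objs(2,3) homs(2) this holds]
  have "() \<in> \<phi> \<theta>'' (times_clk_act (compr_act Gact Xact) \<theta>' \<theta>'' \<tau> ?p)"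
    by (simp only: unit_eq[of "\<phi>act _ _ _ _ _"])
  then show ?thesis
    unfolding times_clk_act_def compr_act_def
    using presheaf_act_tcomp[OF G, OF objs homs \<gamma>] presheaf_over_act_tcomp[OF X', OF objs homs \<gamma> x]
    by simp
qed

lemma predicate_clock_intro_antimono:
  assumes G: "presheaf G Gact" and X: "family G Gact X Xact"
    and \<phi>: "predicate (times_clk (compr G X)) (times_clk_act (compr_act Gact Xact)) \<phi> \<phi>act"
    and \<theta>: "tobj \<theta>" and \<gamma>: "\<gamma> \<in> G \<theta>" and l: "l \<notin> dom \<theta>" and x: "x \<in> X \<theta> \<gamma>"
    and "\<alpha> \<le> \<beta>"
    and holds: "() \<in> \<phi> (\<theta>(l \<mapsto> \<beta>))
               ((Gact \<theta> (\<theta>(l \<mapsto> \<beta>)) (tid \<theta>) \<gamma>, Xact \<theta> (\<theta>(l \<mapsto> \<beta>)) (tid \<theta>) \<gamma> x), l)"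
  shows "() \<in> \<phi> (\<theta>(l \<mapsto> \<alpha>))
               ((Gact \<theta> (\<theta>(l \<mapsto> \<alpha>)) (tid \<theta>) \<gamma>, Xact \<theta> (\<theta>(l \<mapsto> \<alpha>)) (tid \<theta>) \<gamma> x), l)"
proof -
  have "tcomp \<theta> (tid (\<theta>(l \<mapsto> \<beta>))) (tid \<theta>) = tid \<theta>" by (rule tcomp_tid_tid) auto
  moreover have "tid (\<theta>(l \<mapsto> \<beta>)) l = l" unfolding tid_def by simp
  ultimately show ?thesis
    using predicate_mem_transport[OF G X \<phi>, OF \<theta> tobj_fun_upd[OF \<theta>] tobj_fun_upd[OF \<theta>]
        thom_clock_intro[OF l] thom_tid_fun_upd_mono[OF \<open>\<alpha> \<le> \<beta>\<close>] \<gamma> x _ holds]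
    by simp
qed

theorem mainTheorem5:
  fixes G :: "('c::countable \<rightharpoonup> 'o::wellorder) \<Rightarrow> 'g set"
    and Gact :: "('c \<rightharpoonup> 'o) \<Rightarrow> ('c \<rightharpoonup> 'o) \<Rightarrow> ('c \<Rightarrow> 'c) \<Rightarrow> 'g \<Rightarrow> 'g"
    and X :: "('c \<rightharpoonup> 'o) \<Rightarrow> 'g \<Rightarrow> 'x set"
    and Xact :: "('c \<rightharpoonup> 'o) \<Rightarrow> ('c \<rightharpoonup> 'o) \<Rightarrow> ('c \<Rightarrow> 'c) \<Rightarrow> 'g \<Rightarrow> 'x \<Rightarrow> 'x"
    and \<phi> :: "('c \<rightharpoonup> 'o) \<Rightarrow> ('g \<times> 'x) \<times> 'c \<Rightarrow> unit set"
    and \<phi>act :: "('c \<rightharpoonup> 'o) \<Rightarrow> ('c \<rightharpoonup> 'o) \<Rightarrow> ('c \<Rightarrow> 'c) \<Rightarrow> ('g \<times> 'x) \<times> 'c \<Rightarrow> unit \<Rightarrow> unit"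
    and fresh :: "'c set \<Rightarrow> 'c"
    and \<theta> :: "'c \<rightharpoonup> 'o"
    and \<gamma> :: 'g
  assumes "infinite (UNIV :: 'c set)"
    and "limit_ord TYPE('o)"
    and "regular_ord TYPE('o)"
    and "presheaf G Gact"
    and "family G Gact X Xact"
    and "\<forall>\<theta>' \<gamma>'. tobj \<theta>' \<and> \<gamma>' \<in> G \<theta>' \<longrightarrow> (card_of (X \<theta>' \<gamma>'), card_of (UNIV :: 'o set)) \<in> ordLess"
    and "predicate (times_clk (compr G X)) (times_clk_act (compr_act Gact Xact)) \<phi> \<phi>act"
    and "\<forall>E. finite E \<longrightarrow> fresh E \<notin> E"
    and "tobj \<theta>"
    and "\<gamma> \<in> G \<theta>"
  shows "(\<exists>x \<in> X \<theta> \<gamma>. \<forall>\<alpha>::'o.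
            () \<in> \<phi> (\<theta>(fresh (dom \<theta>) \<mapsto> \<alpha>))
                   ((Gact \<theta> (\<theta>(fresh (dom \<theta>) \<mapsto> \<alpha>)) (tid \<theta>) \<gamma>,
                     Xact \<theta> (\<theta>(fresh (dom \<theta>) \<mapsto> \<alpha>)) (tid \<theta>) \<gamma> x),
                    fresh (dom \<theta>)))
     \<longleftrightarrow>
     (\<forall>\<alpha>::'o. \<exists>x \<in> X (\<theta>(fresh (dom \<theta>) \<mapsto> \<alpha>)) (Gact \<theta> (\<theta>(fresh (dom \<theta>) \<mapsto> \<alpha>)) (tid \<theta>) \<gamma>).
            () \<in> \<phi> (\<theta>(fresh (dom \<theta>) \<mapsto> \<alpha>))
                   ((Gact \<theta> (\<theta>(fresh (dom \<theta>) \<mapsto> \<alpha>)) (tid \<theta>) \<gamma>, x), fresh (dom \<theta>)))"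
proof -
  define l where "l = fresh (dom \<theta>)"
  have l: "l \<notin> dom \<theta>" using assms(8,9) unfolding l_def tobj_def by blast
  let ?P = "\<lambda>x \<alpha>. () \<in> \<phi> (\<theta>(l \<mapsto> \<alpha>))
                 ((Gact \<theta> (\<theta>(l \<mapsto> \<alpha>)) (tid \<theta>) \<gamma>, Xact \<theta> (\<theta>(l \<mapsto> \<alpha>)) (tid \<theta>) \<gamma> x), l)"
  have "(\<exists>x\<in>X \<theta> \<gamma>. \<forall>\<alpha>. ?P x \<alpha>) \<longleftrightarrow> (\<forall>\<alpha>. \<exists>x\<in>X \<theta> \<gamma>. ?P x \<alpha>)"
  proof (rule regular_ord_bex_all_commute[OF assms(3)])
    show "|X \<theta> \<gamma>| <o |UNIV :: 'o set|" using assms(6,9,10) by blast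
    show "?P x \<alpha>" if "x \<in> X \<theta> \<gamma>" "\<alpha> \<le> \<beta>" "?P x \<beta>" for x \<alpha> \<beta>
      using predicate_clock_intro_antimono[OF assms(4,5,7), OF assms(9,10) l that] .
  qed
  moreover have "(\<exists>x\<in>X \<theta> \<gamma>. ?P x \<alpha>) \<longleftrightarrow>
      (\<exists>y \<in> X (\<theta>(l \<mapsto> \<alpha>)) (Gact \<theta> (\<theta>(l \<mapsto> \<alpha>)) (tid \<theta>) \<gamma>).
         () \<in> \<phi> (\<theta>(l \<mapsto> \<alpha>)) ((Gact \<theta> (\<theta>(l \<mapsto> \<alpha>)) (tid \<theta>) \<gamma>, y), l))" for \<alpha>
    unfolding family_clock_intro_image[OF assms(5), OF assms(9,10) l, symmetric] by blast
  ultimately show ?thesis unfolding l_def by simp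
qed

end
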